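(* Let $a<b$ and let $f:[a,b]\rightarrow\mathbb{R}$ be a twice continuously differentiable mapping in $(a,b)$ with $f''\in L^2[a,b]$. Then \[ \left|\frac{f\left(\frac{3a+b}{4}\right)+f\left(\frac{a+3b}{4}\right)}{2} -\frac{1}{b-a}\int_{a}^{b}f(t)\,dt\right|\leq \frac{(b-a)^{3/2}}{4\sqrt{3}\pi}\|f''\|_2. \]
   Context: $\|g\|_2=\left(\int_a^b g(t)^2\,dt\right)^{1/2}$. *)

theory Defs
  imports "HOL-Analysis.Analysis"
begin

definition L2_norm_on :: "real \<Rightarrow> real \<Rightarrow> (real \<Rightarrow> real) \<Rightarrow> real" where
  "L2_norm_on a b g = sqrt (integral {a..b} (\<lambda>t. (g t)^2))"

end

theory Submission
  imports Defs
begin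

(* The two-point formula is the composite midpoint rule on the two halves of [a,b]. On an
   interval [c,e] with midpoint p, integrating f'' against the Peano kernel (t - c)^2/2 on [c,p]
   and (t - e)^2/2 on [p,e] by parts twice expresses the midpoint error through f''; the kernel is
   at most (e - c)^2/8, so the error of the two-point formula is at most (b - a)/32 times the
   L1 norm of f''. Cauchy-Schwarz bounds that norm by sqrt (b - a) times the L2 norm, and
   32 > 4 sqrt 3 pi. As f is differentiable only on the open interval, the boundary terms at a and b
   vanish because f and f' are bounded, which follows from the integrability of f''. *)

lemma continuous_dominated_imp_absolutely_integrable:
  fixes g h :: "real \<Rightarrow> real"
  assumes g: "continuous_on {a<..<b} g" and h: "h integrable_on {a..b}"
    and dom: "\<And>x. x \<in> {a<..<b} \<Longrightarrow> \<bar>g x\<bar> \<le> h x"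
  shows "g absolutely_integrable_on {a..b}"
proof -
  have "g absolutely_integrable_on {a<..<b}"
  proof (rule measurable_bounded_by_integrable_imp_absolutely_integrable)
    show "g \<in> borel_measurable (lebesgue_on {a<..<b})"
      by (rule continuous_imp_measurable_on_sets_lebesgue[OF g]) auto
    show "h integrable_on {a<..<b}"
      using h by (simp add: integrable_on_open_interval_real)
  qed (use dom in auto)
  then show ?thesis
    using absolutely_integrable_on_open_interval[where f = g and a = a and b = b] by simp
qed

lemma abs_diff_le_integral_abs_derivative:
  fixes g g' :: "real \<Rightarrow> real"
  assumes "a < c" "c \<le> d" "d < b"
    and g: "\<And>x. x \<in> {a<..<b} \<Longrightarrow> (g has_real_derivative g' x) (at x)"
    and g': "g' absolutely_integrable_on {a..b}"
  shows "\<bar>g d - g c\<bar> \<le> integral {a..b} (\<lambda>t. \<bar>g' t\<bar>)"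
proof -
  have "(g' has_integral (g d - g c)) {c..d}"
  proof (rule fundamental_theorem_of_calculus[OF \<open>c \<le> d\<close>])
    fix x assume "x \<in> {c..d}"
    then have "(g has_real_derivative g' x) (at x)"
      using assms by (intro g) auto
    then show "(g has_vector_derivative g' x) (at x within {c..d})"
      by (simp add: has_real_derivative_iff_has_vector_derivative has_vector_derivative_at_within)
  qed
  then have "g d - g c = integral {c..d} g'"
    by (simp add: integral_unique)
  moreover have g'_cd: "g' absolutely_integrable_on {c..d}"
    using absolutely_integrable_on_subinterval[OF g'] assms by auto
  then have "\<bar>integral {c..d} g'\<bar> \<le> integral {c..d} (\<lambda>t. \<bar>g' t\<bar>)"
    using integral_norm_bound_integral[of g' "{c..d}" "\<lambda>t. \<bar>g' t\<bar>"]
    by (auto simp: absolutely_integrable_on_def)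
  moreover have "integral {c..d} (\<lambda>t. \<bar>g' t\<bar>) \<le> integral {a..b} (\<lambda>t. \<bar>g' t\<bar>)"
    using assms g' g'_cd by (intro integral_subset_le) (auto simp: absolutely_integrable_on_def)
  ultimately show ?thesis
    by linarith
qed

lemma bounded_if_derivative_absolutely_integrable:
  fixes g g' :: "real \<Rightarrow> real"
  assumes g: "\<And>x. x \<in> {a<..<b} \<Longrightarrow> (g has_real_derivative g' x) (at x)"
    and g': "g' absolutely_integrable_on {a..b}"
  obtains M where "\<And>x. x \<in> {a<..<b} \<Longrightarrow> \<bar>g x\<bar> \<le> M"
proof
  fix x assume x: "x \<in> {a<..<b}"
  define m where "m = (a + b) / 2"
  have m: "m \<in> {a<..<b}"
    using x by (auto simp: m_def)
  have "\<bar>g x - g m\<bar> \<le> integral {a..b} (\<lambda>t. \<bar>g' t\<bar>)"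
  proof (cases "x \<le> m")
    case True
    then show ?thesis
      using abs_diff_le_integral_abs_derivative[OF _ True _ g g'] x m by (simp add: abs_minus_commute)
  next
    case False
    then show ?thesis
      using abs_diff_le_integral_abs_derivative[OF _ _ _ g g', of m x] x m by simp
  qed
  then show "\<bar>g x\<bar> \<le> \<bar>g ((a + b) / 2)\<bar> + integral {a..b} (\<lambda>t. \<bar>g' t\<bar>)"
    unfolding m_def by linarith
qed

(* The boundary term when (t - u)^2/2 * f''(t) is integrated by parts twice. *)
definition peano_primitive :: "(real \<Rightarrow> real) \<Rightarrow> (real \<Rightarrow> real) \<Rightarrow> real \<Rightarrow> real \<Rightarrow> real" where
  "peano_primitive f f' u t = (t - u)^2 / 2 * f' t - (t - u) * f t"

lemma has_real_derivative_peano_primitive: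
  assumes f: "(f has_real_derivative f' x) (at x)" and f': "(f' has_real_derivative f'' x) (at x)"
  shows "(peano_primitive f f' u has_real_derivative (x - u)^2 / 2 * f'' x - f x) (at x)"
proof -
  have "(peano_primitive f f' u has_real_derivative
          2 * (x - u) * 1 / 2 * f' x + (x - u)^2 / 2 * f'' x - (1 * f x + (x - u) * f' x)) (at x)"
    unfolding peano_primitive_def by (auto intro!: derivative_eq_intros f f')
  moreover have "2 * (x - u) * 1 / 2 * f' x + (x - u)^2 / 2 * f'' x - (1 * f x + (x - u) * f' x)
      = (x - u)^2 / 2 * f'' x - f x"
    by (simp add: field_simps)
  ultimately show ?thesis
    by (simp only:)
qed

lemma tendsto_peano_primitive_zero:
  assumes M: "\<And>t. t \<in> S \<Longrightarrow> t \<noteq> u \<Longrightarrow> \<bar>f' t\<bar> \<le> M"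
    and N: "\<And>t. t \<in> S \<Longrightarrow> t \<noteq> u \<Longrightarrow> \<bar>f t\<bar> \<le> N"
  shows "(peano_primitive f f' u \<longlongrightarrow> 0) (at u within S)"
proof (rule Lim_null_comparison)
  show "\<forall>\<^sub>F t in at u within S. norm (peano_primitive f f' u t) \<le> (t - u)^2 / 2 * M + \<bar>t - u\<bar> * N"
    unfolding eventually_at_filter
  proof (intro always_eventually allI impI)
    fix t assume t: "t \<noteq> u" "t \<in> S"
    have "norm (peano_primitive f f' u t) \<le> \<bar>(t - u)^2 / 2 * f' t\<bar> + \<bar>(t - u) * f t\<bar>"
      unfolding peano_primitive_def by (simp add: abs_triangle_ineq4)
    also have "\<dots> \<le> (t - u)^2 / 2 * M + \<bar>t - u\<bar> * N"
      using M[OF t(2,1)] N[OF t(2,1)] by (intro add_mono) (auto simp: abs_mult intro!: mult_left_mono)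
    finally show "norm (peano_primitive f f' u t) \<le> (t - u)^2 / 2 * M + \<bar>t - u\<bar> * N" .
  qed
  show "((\<lambda>t. (t - u)^2 / 2 * M + \<bar>t - u\<bar> * N) \<longlongrightarrow> 0) (at u within S)"
    by (rule tendsto_eq_intros refl | simp)+
qed

lemma continuous_on_peano_primitive:
  assumes "S \<subseteq> insert u T"
    and f: "\<And>x. x \<in> T \<Longrightarrow> (f has_real_derivative f' x) (at x)"
    and f': "\<And>x. x \<in> T \<Longrightarrow> (f' has_real_derivative f'' x) (at x)"
    and M: "\<And>x. x \<in> T \<Longrightarrow> \<bar>f' x\<bar> \<le> M"
    and N: "\<And>x. x \<in> T \<Longrightarrow> \<bar>f x\<bar> \<le> N"
  shows "continuous_on S (peano_primitive f f' u)"
  unfolding continuous_on_eq_continuous_within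
proof
  fix x assume x: "x \<in> S"
  show "continuous (at x within S) (peano_primitive f f' u)"
  proof (cases "x = u")
    case True
    have "(peano_primitive f f' u \<longlongrightarrow> 0) (at u within S)"
      using assms by (intro tendsto_peano_primitive_zero[where M = M and N = N]) auto
    then show ?thesis
      using True by (simp add: continuous_within peano_primitive_def)
  next
    case False
    then have "x \<in> T"
      using x assms(1) by auto
    from has_real_derivative_peano_primitive[where f'' = f'', OF f[OF this] f'[OF this]] show ?thesis
      by (rule continuous_at_imp_continuous_at_within[OF DERIV_isCont])
  qed
qed

lemma peano_primitive_has_integral:
  assumes "c \<le> d"
    and f: "\<And>x. x \<in> {c<..<d} \<Longrightarrow> (f has_real_derivative f' x) (at x)"
    and f': "\<And>x. x \<in> {c<..<d} \<Longrightarrow> (f' has_real_derivative f'' x) (at x)"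
    and cont: "continuous_on {c..d} (peano_primitive f f' u)"
  shows "((\<lambda>t. (t - u)^2 / 2 * f'' t - f t) has_integral
           peano_primitive f f' u d - peano_primitive f f' u c) {c..d}"
proof (rule fundamental_theorem_of_calculus_interior[OF \<open>c \<le> d\<close> cont])
  fix x assume "x \<in> {c<..<d}"
  from has_real_derivative_peano_primitive[where f'' = f'', OF f[OF this] f'[OF this]]
  show "(peano_primitive f f' u has_vector_derivative (x - u)^2 / 2 * f'' x - f x) (at x)"
    by (simp add: has_real_derivative_iff_has_vector_derivative)
qed

lemma absolutely_integrable_on_continuous_mult:
  fixes \<phi> g :: "real \<Rightarrow> real"
  assumes \<phi>: "continuous_on {c..d} \<phi>" and g: "g absolutely_integrable_on {c..d}"
  shows "(\<lambda>t. \<phi> t * g t) absolutely_integrable_on {c..d}"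
proof (rule absolutely_integrable_bounded_measurable_product_real[OF _ _ _ g])
  show "\<phi> \<in> borel_measurable (lebesgue_on {c..d})"
    by (rule continuous_imp_measurable_on_sets_lebesgue[OF \<phi>]) auto
  show "bounded (\<phi> ` {c..d})"
    by (rule compact_imp_bounded[OF compact_continuous_image[OF \<phi> compact_Icc]])
qed auto

lemma peano_kernel_integral_bound:
  fixes g :: "real \<Rightarrow> real"
  assumes g: "g absolutely_integrable_on {c..d}" and h: "\<And>t. t \<in> {c..d} \<Longrightarrow> \<bar>t - u\<bar> \<le> h"
  shows "\<bar>integral {c..d} (\<lambda>t. (t - u)^2 / 2 * g t)\<bar> \<le> h^2 / 2 * integral {c..d} (\<lambda>t. \<bar>g t\<bar>)"
proof -
  have "norm (integral {c..d} (\<lambda>t. (t - u)^2 / 2 * g t)) \<le> integral {c..d} (\<lambda>t. h^2 / 2 * \<bar>g t\<bar>)"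
  proof (rule integral_norm_bound_integral)
    show "(\<lambda>t. (t - u)^2 / 2 * g t) integrable_on {c..d}"
      by (rule set_lebesgue_integral_eq_integral(1), rule absolutely_integrable_on_continuous_mult[OF _ g])
        (intro continuous_intros, simp)
    show "(\<lambda>t. h^2 / 2 * \<bar>g t\<bar>) integrable_on {c..d}"
      using g integrable_on_cmult_left[of "\<lambda>t. \<bar>g t\<bar>" "{c..d}" "h^2 / 2"]
      by (simp add: absolutely_integrable_on_def)
    fix t assume "t \<in> {c..d}"
    then have "(t - u)^2 \<le> h^2"
      using h by (metis abs_ge_zero order_trans power2_abs power_mono)
    then show "norm ((t - u)^2 / 2 * g t) \<le> h^2 / 2 * \<bar>g t\<bar>"
      by (simp add: abs_mult mult_right_mono)
  qed
  then show ?thesis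
    by simp
qed

lemma has_integral_peano_kernel:
  assumes "s \<le> t" "{s<..<t} \<subseteq> T" "{s..t} \<subseteq> insert u T"
    and f: "\<And>x. x \<in> T \<Longrightarrow> (f has_real_derivative f' x) (at x)"
    and f': "\<And>x. x \<in> T \<Longrightarrow> (f' has_real_derivative f'' x) (at x)"
    and M: "\<And>x. x \<in> T \<Longrightarrow> \<bar>f' x\<bar> \<le> M"
    and N: "\<And>x. x \<in> T \<Longrightarrow> \<bar>f x\<bar> \<le> N"
    and f'': "f'' absolutely_integrable_on {s..t}"
  shows "(f has_integral integral {s..t} (\<lambda>x. (x - u)^2 / 2 * f'' x)
            - (peano_primitive f f' u t - peano_primitive f f' u s)) {s..t}"
proof -
  have primitive: "((\<lambda>x. (x - u)^2 / 2 * f'' x - f x) has_integral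
                      peano_primitive f f' u t - peano_primitive f f' u s) {s..t}"
    by (rule peano_primitive_has_integral[OF \<open>s \<le> t\<close> _ _
          continuous_on_peano_primitive[OF \<open>{s..t} \<subseteq> insert u T\<close> f f' M N]])
      (use assms in auto)
  have kernel: "((\<lambda>x. (x - u)^2 / 2 * f'' x) has_integral
                   integral {s..t} (\<lambda>x. (x - u)^2 / 2 * f'' x)) {s..t}"
    by (rule integrable_integral, rule set_lebesgue_integral_eq_integral(1),
        rule absolutely_integrable_on_continuous_mult[OF _ f''])
      (intro continuous_intros, simp)
  from has_integral_diff[OF kernel primitive] show ?thesis
    by simp
qed

lemma midpoint_rule_peano_representation:
  fixes f f' f'' :: "real \<Rightarrow> real"
  assumes "c < e"
    and f: "\<And>x. x \<in> {c<..<e} \<Longrightarrow> (f has_real_derivative f' x) (at x)"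
    and f': "\<And>x. x \<in> {c<..<e} \<Longrightarrow> (f' has_real_derivative f'' x) (at x)"
    and M: "\<And>x. x \<in> {c<..<e} \<Longrightarrow> \<bar>f' x\<bar> \<le> M"
    and N: "\<And>x. x \<in> {c<..<e} \<Longrightarrow> \<bar>f x\<bar> \<le> N"
    and f'': "f'' absolutely_integrable_on {c..e}"
  shows "(f has_integral (e - c) * f ((c + e) / 2)
            + integral {c..(c + e) / 2} (\<lambda>t. (t - c)^2 / 2 * f'' t)
            + integral {(c + e) / 2..e} (\<lambda>t. (t - e)^2 / 2 * f'' t)) {c..e}"
proof -
  define p where "p = (c + e) / 2"
  have p: "c < p" "p < e" and half: "p - c = (e - c) / 2" "e - p = (e - c) / 2"
    using \<open>c < e\<close> by (auto simp: p_def field_simps)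
  note piece = has_integral_peano_kernel[where T = "{c<..<e}", OF _ _ _ f f' M N
      absolutely_integrable_on_subinterval[OF f'']]
  define J1 where "J1 = integral {c..p} (\<lambda>t. (t - c)^2 / 2 * f'' t)"
  define J2 where "J2 = integral {p..e} (\<lambda>t. (t - e)^2 / 2 * f'' t)"
  have "(f has_integral J1 - (peano_primitive f f' c p - peano_primitive f f' c c)) {c..p}"
    unfolding J1_def by (rule piece) (use p in auto)
  then have left: "(f has_integral J1 + (p - c) * f p - (p - c)^2 / 2 * f' p) {c..p}"
    by (simp add: peano_primitive_def algebra_simps)
  have "(f has_integral J2 - (peano_primitive f f' e e - peano_primitive f f' e p)) {p..e}"
    unfolding J2_def by (rule piece) (use p in auto)
  then have right: "(f has_integral J2 + (e - p) * f p + (e - p)^2 / 2 * f' p) {p..e}"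
    by (simp add: peano_primitive_def algebra_simps power2_commute)
  have "(f has_integral (J1 + (p - c) * f p - (p - c)^2 / 2 * f' p)
          + (J2 + (e - p) * f p + (e - p)^2 / 2 * f' p)) {c..e}"
    using p by (intro has_integral_combine[OF _ _ left right]) auto
  moreover have "(J1 + (p - c) * f p - (p - c)^2 / 2 * f' p) + (J2 + (e - p) * f p + (e - p)^2 / 2 * f' p)
                   = (e - c) * f p + J1 + J2"
    unfolding half by (simp add: field_simps)
  ultimately show ?thesis
    unfolding J1_def J2_def p_def by (simp only:)
qed

lemma midpoint_rule_error_bound:
  fixes f f' f'' :: "real \<Rightarrow> real"
  assumes "c < e"
    and "\<And>x. x \<in> {c<..<e} \<Longrightarrow> (f has_real_derivative f' x) (at x)"
    and "\<And>x. x \<in> {c<..<e} \<Longrightarrow> (f' has_real_derivative f'' x) (at x)"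
    and "\<And>x. x \<in> {c<..<e} \<Longrightarrow> \<bar>f' x\<bar> \<le> M"
    and "\<And>x. x \<in> {c<..<e} \<Longrightarrow> \<bar>f x\<bar> \<le> N"
    and f'': "f'' absolutely_integrable_on {c..e}"
  shows "f integrable_on {c..e}"
    and "\<bar>(e - c) * f ((c + e) / 2) - integral {c..e} f\<bar>
           \<le> (e - c)^2 / 8 * integral {c..e} (\<lambda>t. \<bar>f'' t\<bar>)"
proof -
  define p where "p = (c + e) / 2"
  have p: "c < p" "p < e"
    using \<open>c < e\<close> by (auto simp: p_def)
  define J1 where "J1 = integral {c..p} (\<lambda>t. (t - c)^2 / 2 * f'' t)"
  define J2 where "J2 = integral {p..e} (\<lambda>t. (t - e)^2 / 2 * f'' t)"
  have repr: "(f has_integral (e - c) * f p + J1 + J2) {c..e}"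
    unfolding J1_def J2_def p_def by (rule midpoint_rule_peano_representation[OF assms])
  then show "f integrable_on {c..e}"
    by (rule has_integral_integrable)
  note f''_sub = absolutely_integrable_on_subinterval[OF f'']
  have "\<bar>(e - c) * f ((c + e) / 2) - integral {c..e} f\<bar> = \<bar>J1 + J2\<bar>"
    using integral_unique[OF repr] by (simp add: p_def)
  also have "\<dots> \<le> \<bar>J1\<bar> + \<bar>J2\<bar>"
    by (rule abs_triangle_ineq)
  also have "\<dots> \<le> (e - c)^2 / 8 * integral {c..p} (\<lambda>t. \<bar>f'' t\<bar>)
                   + (e - c)^2 / 8 * integral {p..e} (\<lambda>t. \<bar>f'' t\<bar>)"
  proof (rule add_mono)
    show "\<bar>J1\<bar> \<le> (e - c)^2 / 8 * integral {c..p} (\<lambda>t. \<bar>f'' t\<bar>)"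
      using peano_kernel_integral_bound[OF f''_sub, of c p c "(e - c) / 2"] p
      by (simp add: J1_def p_def power_divide)
    show "\<bar>J2\<bar> \<le> (e - c)^2 / 8 * integral {p..e} (\<lambda>t. \<bar>f'' t\<bar>)"
      using peano_kernel_integral_bound[OF f''_sub, of p e e "(e - c) / 2"] p
      by (simp add: J2_def p_def power_divide)
  qed
  also have "\<dots> = (e - c)^2 / 8 * integral {c..e} (\<lambda>t. \<bar>f'' t\<bar>)"
    unfolding distrib_left[symmetric] using f'' p
    by (subst Henstock_Kurzweil_Integration.integral_combine) (auto simp: absolutely_integrable_on_def)
  finally show "\<bar>(e - c) * f ((c + e) / 2) - integral {c..e} f\<bar>
                  \<le> (e - c)^2 / 8 * integral {c..e} (\<lambda>t. \<bar>f'' t\<bar>)" .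
qed

lemma bounded_if_second_derivative_absolutely_integrable:
  fixes f f' f'' :: "real \<Rightarrow> real"
  assumes f: "\<And>x. x \<in> {a<..<b} \<Longrightarrow> (f has_real_derivative f' x) (at x)"
    and f': "\<And>x. x \<in> {a<..<b} \<Longrightarrow> (f' has_real_derivative f'' x) (at x)"
    and f'': "f'' absolutely_integrable_on {a..b}"
  obtains M N where "\<And>x. x \<in> {a<..<b} \<Longrightarrow> \<bar>f' x\<bar> \<le> M"
    and "\<And>x. x \<in> {a<..<b} \<Longrightarrow> \<bar>f x\<bar> \<le> N"
proof -
  obtain M where M: "\<And>x. x \<in> {a<..<b} \<Longrightarrow> \<bar>f' x\<bar> \<le> M"
    using bounded_if_derivative_absolutely_integrable[OF f' f''] by blast
  have "continuous_on {a<..<b} f'"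
    by (rule continuous_at_imp_continuous_on) (use f' DERIV_isCont in blast)
  then have "f' absolutely_integrable_on {a..b}"
    by (rule continuous_dominated_imp_absolutely_integrable[where h = "\<lambda>_. M"]) (use M in auto)
  then obtain N where "\<And>x. x \<in> {a<..<b} \<Longrightarrow> \<bar>f x\<bar> \<le> N"
    using bounded_if_derivative_absolutely_integrable[OF f] by blast
  with M show ?thesis
    using that by blast
qed

lemma two_point_rule_error_bound:
  fixes f f' f'' :: "real \<Rightarrow> real"
  assumes "a < b"
    and f: "\<And>x. x \<in> {a<..<b} \<Longrightarrow> (f has_real_derivative f' x) (at x)"
    and f': "\<And>x. x \<in> {a<..<b} \<Longrightarrow> (f' has_real_derivative f'' x) (at x)"
    and f'': "f'' absolutely_integrable_on {a..b}"
  shows "\<bar>(f ((3*a + b)/4) + f ((a + 3*b)/4)) / 2 - (1/(b - a)) * integral {a..b} f\<bar>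
           \<le> (b - a) / 32 * integral {a..b} (\<lambda>t. \<bar>f'' t\<bar>)"
proof -
  obtain M N where M: "\<And>x. x \<in> {a<..<b} \<Longrightarrow> \<bar>f' x\<bar> \<le> M"
    and N: "\<And>x. x \<in> {a<..<b} \<Longrightarrow> \<bar>f x\<bar> \<le> N"
    using bounded_if_second_derivative_absolutely_integrable[OF f f' f''] by blast
  define m where "m = (a + b) / 2"
  have m: "a < m" "m < b" and half: "m - a = (b - a) / 2" "b - m = (b - a) / 2"
    using \<open>a < b\<close> by (auto simp: m_def field_simps)
  note midpoint = midpoint_rule_error_bound[where f = f and f' = f' and f'' = f'' and M = M and N = N]
  note f''_sub = absolutely_integrable_on_subinterval[OF f'']
  define E1 where "E1 = (m - a) * f ((a + m) / 2) - integral {a..m} f"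
  define E2 where "E2 = (b - m) * f ((m + b) / 2) - integral {m..b} f"
  have int_left: "f integrable_on {a..m}"
    and E1: "\<bar>E1\<bar> \<le> (m - a)^2 / 8 * integral {a..m} (\<lambda>t. \<bar>f'' t\<bar>)"
    unfolding E1_def using midpoint[of a m] m f f' M N f''_sub[of a m] by auto
  have int_right: "f integrable_on {m..b}"
    and E2: "\<bar>E2\<bar> \<le> (b - m)^2 / 8 * integral {m..b} (\<lambda>t. \<bar>f'' t\<bar>)"
    unfolding E2_def using midpoint[of m b] m f f' M N f''_sub[of m b] by auto
  have "integral {a..b} f = integral {a..m} f + integral {m..b} f"
    using m by (intro Henstock_Kurzweil_Integration.integral_combine[symmetric]
        Henstock_Kurzweil_Integration.integrable_combine[OF _ _ int_left int_right]) auto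
  then have "(f ((3*a + b)/4) + f ((a + 3*b)/4)) / 2 - (1/(b - a)) * integral {a..b} f = (E1 + E2) / (b - a)"
    using \<open>a < b\<close> by (simp add: E1_def E2_def m_def field_simps)
  then have "\<bar>(f ((3*a + b)/4) + f ((a + 3*b)/4)) / 2 - (1/(b - a)) * integral {a..b} f\<bar>
               = \<bar>E1 + E2\<bar> / (b - a)"
    using \<open>a < b\<close> by simp
  also have "\<dots> \<le> (\<bar>E1\<bar> + \<bar>E2\<bar>) / (b - a)"
    using \<open>a < b\<close> by (intro divide_right_mono abs_triangle_ineq) simp
  also have "\<dots> \<le> ((b - a)^2 / 32 * integral {a..m} (\<lambda>t. \<bar>f'' t\<bar>)
                    + (b - a)^2 / 32 * integral {m..b} (\<lambda>t. \<bar>f'' t\<bar>)) / (b - a)"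
    using E1 E2 \<open>a < b\<close> unfolding half by (intro divide_right_mono add_mono) (simp_all add: power_divide)
  also have "\<dots> = (b - a) / 32 * integral {a..b} (\<lambda>t. \<bar>f'' t\<bar>)"
  proof -
    have "integral {a..m} (\<lambda>t. \<bar>f'' t\<bar>) + integral {m..b} (\<lambda>t. \<bar>f'' t\<bar>)
            = integral {a..b} (\<lambda>t. \<bar>f'' t\<bar>)"
      using f'' m by (intro Henstock_Kurzweil_Integration.integral_combine)
        (auto simp: absolutely_integrable_on_def)
    then show ?thesis
      unfolding distrib_left[symmetric] using \<open>a < b\<close> by (simp add: field_simps power2_eq_square)
  qed
  finally show ?thesis .
qed

(* Cauchy-Schwarz, from 0 \<le> integral of (|g| - c)^2 with c the mean value of |g|. *)
lemma integral_abs_le_L2_norm_on: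
  fixes g :: "real \<Rightarrow> real"
  assumes "a < b" and g: "g absolutely_integrable_on {a..b}"
    and g2: "(\<lambda>t. (g t)^2) integrable_on {a..b}"
  shows "integral {a..b} (\<lambda>t. \<bar>g t\<bar>) \<le> sqrt (b - a) * L2_norm_on a b g"
proof -
  define K where "K = integral {a..b} (\<lambda>t. \<bar>g t\<bar>)"
  define B where "B = integral {a..b} (\<lambda>t. (g t)^2)"
  define c where "c = K / (b - a)"
  have "((\<lambda>t. (g t)^2 - 2 * c * \<bar>g t\<bar> + c^2) has_integral B - 2 * c * K + c^2 * (b - a)) {a..b}"
  proof (intro has_integral_add has_integral_diff has_integral_mult_right)
    show "((\<lambda>t. (g t)^2) has_integral B) {a..b}"
      unfolding B_def using g2 by (rule integrable_integral)
    show "((\<lambda>t. \<bar>g t\<bar>) has_integral K) {a..b}"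
      unfolding K_def using g by (intro integrable_integral) (simp add: absolutely_integrable_on_def)
    show "((\<lambda>t. c^2) has_integral c^2 * (b - a)) {a..b}"
      using has_integral_const_real[of "c^2" a b] \<open>a < b\<close> by (simp add: mult.commute)
  qed
  then have "0 \<le> B - 2 * c * K + c^2 * (b - a)"
  proof (rule has_integral_nonneg)
    fix t
    show "0 \<le> (g t)^2 - 2 * c * \<bar>g t\<bar> + c^2"
      using zero_le_power2[of "\<bar>g t\<bar> - c"] by (simp add: power2_eq_square algebra_simps)
  qed
  moreover have cK: "c * (b - a) = K"
    using \<open>a < b\<close> by (simp add: c_def)
  then have "c^2 * (b - a) = c * K"
    by (metis mult.assoc power2_eq_square)
  ultimately have "c * K \<le> B"
    by linarith
  have "K^2 = (b - a) * (c * K)"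
    using cK by (metis mult.assoc mult.commute power2_eq_square)
  also have "\<dots> \<le> (b - a) * B"
    using \<open>c * K \<le> B\<close> \<open>a < b\<close> by (intro mult_left_mono) auto
  finally have "K^2 \<le> (b - a) * B" .
  then have "K \<le> sqrt ((b - a) * B)"
    by (rule real_le_rsqrt)
  then show ?thesis
    by (simp add: K_def B_def L2_norm_on_def real_sqrt_mult)
qed

theorem corollary2p5:
  fixes f f' f'' :: "real \<Rightarrow> real" and a b :: real
  assumes "a < b"
    and "\<And>x. x \<in> {a<..<b} \<Longrightarrow> (f has_real_derivative f' x) (at x)"
    and "\<And>x. x \<in> {a<..<b} \<Longrightarrow> (f' has_real_derivative f'' x) (at x)"
    and "continuous_on {a<..<b} f''"
    and "(\<lambda>t. (f'' t)^2) integrable_on {a..b}"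
  shows "\<bar>(f ((3*a + b)/4) + f ((a + 3*b)/4)) / 2 - (1/(b - a)) * integral {a..b} f\<bar>
           \<le> (b - a) powr (3/2) / (4 * sqrt 3 * pi) * L2_norm_on a b f''"
proof -
  have f'': "f'' absolutely_integrable_on {a..b}"
  proof (rule continuous_dominated_imp_absolutely_integrable[OF assms(4)])
    show "(\<lambda>t. 1 + (f'' t)^2) integrable_on {a..b}"
      using assms(5) by (intro integrable_add) auto
    show "\<bar>f'' x\<bar> \<le> 1 + (f'' x)^2" for x
      using zero_le_power2[of "\<bar>f'' x\<bar> - 1"] by (simp add: power2_eq_square algebra_simps)
  qed
  have "\<bar>(f ((3*a + b)/4) + f ((a + 3*b)/4)) / 2 - (1/(b - a)) * integral {a..b} f\<bar>
          \<le> (b - a) / 32 * integral {a..b} (\<lambda>t. \<bar>f'' t\<bar>)"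
    by (rule two_point_rule_error_bound[OF assms(1-3) f''])
  also have "\<dots> \<le> (b - a) / 32 * (sqrt (b - a) * L2_norm_on a b f'')"
    using integral_abs_le_L2_norm_on[OF assms(1) f'' assms(5)] assms(1) by simp
  also have "\<dots> = (b - a) powr (3/2) / 32 * L2_norm_on a b f''"
  proof -
    have "(b - a) powr (3/2) = (b - a) * sqrt (b - a)"
      using powr_add[of "b - a" 1 "1/2"] assms(1) by (simp add: powr_half_sqrt)
    then show ?thesis
      by simp
  qed
  also have "\<dots> \<le> (b - a) powr (3/2) / (4 * sqrt 3 * pi) * L2_norm_on a b f''"
  proof (intro mult_right_mono divide_left_mono)
    have "sqrt 3 \<le> 2"
      by (simp add: real_sqrt_le_iff real_le_lsqrt)
    then show "4 * sqrt 3 * pi \<le> 32"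
      using pi_less_4 by (intro order.trans[OF mult_mono[of _ 8 pi 4]]) auto
  qed (auto simp: L2_norm_on_def intro!: integral_nonneg assms(5))
  finally show ?thesis .
qed

end
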